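(* Let $(R,\pi)$ be a permutation rack. Then: (1) $(R,\pi)$ is connected if and only if $\pi$ is a cycle involving all elements of $R$; (2) $(R,\pi)$ is homogeneous if and only if $\pi$ is a product of disjoint cycles all of the same length; (3) $(R,\pi)$ is irreducible if and only if $\pi\neq\mathrm{id}_R$ or $R$ has at most one element.
   Context: A rack is a set $R$ with a binary operation $\rhd$ such that every left multiplication $\ell_a\colon b\mapsto a\rhd b$ is a bijection and $a\rhd(b\rhd c)=(a\rhd b)\rhd(a\rhd c)$ for all $a,b,c$. A permutation rack $(R,\pi)$ is a set $R$ with a permutation $\pi$ of $R$ and operation $a\rhd b=\pi(b)$ for all $a,b\in R$. The inner automorphism group $\mathrm{Inn}(R)$ is the subgroup of the symmetric group on $R$ generated by all $\ell_a$; a rack is connected if $\mathrm{Inn}(R)$ has exactly one orbit on $R$, and homogeneous if the automorphism group $\mathrm{Aut}(R)$ has exactly one orbit on $R$. For racks $S,T$, their disjoint union $S\sqcup T$ is the rack on the disjoint union of sets with $a\rhd b$ as in $S$ or $T$ when $a,b$ lie in the same one, and $a\rhd b=b$ otherwise. A rack $R$ is irreducible if $R\neq\emptyset$ and whenever $R=S\sqcup T$ as racks (i.e. $S,T$ are disjoint subsets with union $R$, each closed under $\rhd$, such that $s\rhd t=t$ and $t\rhd s=s$ for all $s\in S,t\in T$), one of $S,T$ is empty. *)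

theory Defs
  imports "HOL-Combinatorics.Permutations" "HOL-Library.Equipollence"
begin

text \<open>A rack on carrier R with operation op (op a b = a |> b).\<close>

definition rack_closed :: "'a set \<Rightarrow> ('a \<Rightarrow> 'a \<Rightarrow> 'a) \<Rightarrow> bool" where
  "rack_closed S op \<longleftrightarrow> (\<forall>a\<in>S. \<forall>b\<in>S. op a b \<in> S)"

definition lmul :: "'a set \<Rightarrow> ('a \<Rightarrow> 'a \<Rightarrow> 'a) \<Rightarrow> 'a \<Rightarrow> 'a \<Rightarrow> 'a" where
  "lmul R op a = (\<lambda>x. if x \<in> R then op a x else x)"

inductive_set inn :: "'a set \<Rightarrow> ('a \<Rightarrow> 'a \<Rightarrow> 'a) \<Rightarrow> ('a \<Rightarrow> 'a) set"
  for R op where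
  inn_id: "id \<in> inn R op"
| inn_mul: "g \<in> inn R op \<Longrightarrow> a \<in> R \<Longrightarrow> lmul R op a \<circ> g \<in> inn R op"
| inn_inv: "g \<in> inn R op \<Longrightarrow> a \<in> R \<Longrightarrow> inv (lmul R op a) \<circ> g \<in> inn R op"

definition rack_connected :: "'a set \<Rightarrow> ('a \<Rightarrow> 'a \<Rightarrow> 'a) \<Rightarrow> bool" where
  "rack_connected R op \<longleftrightarrow> R \<noteq> {} \<and> (\<forall>x\<in>R. \<forall>y\<in>R. \<exists>g\<in>inn R op. g x = y)"

definition rack_aut :: "'a set \<Rightarrow> ('a \<Rightarrow> 'a \<Rightarrow> 'a) \<Rightarrow> ('a \<Rightarrow> 'a) \<Rightarrow> bool" where
  "rack_aut R op f \<longleftrightarrow> bij_betw f R R \<and> (\<forall>a\<in>R. \<forall>b\<in>R. f (op a b) = op (f a) (f b))"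

definition rack_homogeneous :: "'a set \<Rightarrow> ('a \<Rightarrow> 'a \<Rightarrow> 'a) \<Rightarrow> bool" where
  "rack_homogeneous R op \<longleftrightarrow> R \<noteq> {} \<and> (\<forall>x\<in>R. \<forall>y\<in>R. \<exists>f. rack_aut R op f \<and> f x = y)"

definition rack_irreducible :: "'a set \<Rightarrow> ('a \<Rightarrow> 'a \<Rightarrow> 'a) \<Rightarrow> bool" where
  "rack_irreducible R op \<longleftrightarrow> R \<noteq> {} \<and>
     (\<forall>S T. S \<inter> T = {} \<and> S \<union> T = R \<and> rack_closed S op \<and> rack_closed T op \<and>
        (\<forall>s\<in>S. \<forall>t\<in>T. op s t = t \<and> op t s = s) \<longrightarrow> S = {} \<or> T = {})"

definition perm_rack_op :: "('a \<Rightarrow> 'a) \<Rightarrow> 'a \<Rightarrow> 'a \<Rightarrow> 'a" where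
  "perm_rack_op \<pi> = (\<lambda>a b. \<pi> b)"

definition perm_cycle :: "('a \<Rightarrow> 'a) \<Rightarrow> 'a \<Rightarrow> 'a set" where
  "perm_cycle \<pi> x = {(\<pi> ^^ n) x | n. True} \<union> {(inv \<pi> ^^ n) x | n. True}"

end

theory Submission
  imports Defs "HOL-Combinatorics.Cycles"
begin

text \<open>
  Every left multiplication of a permutation rack is \<pi> itself, so Inn(R) is the cyclic group of
  integer powers of \<pi>, whose orbits are the cycles of \<pi>. The automorphisms are exactly the
  permutations of R commuting with \<pi>; such a map carries each cycle bijectively onto a cycle.
  Conversely, the stabilizer in \<int> of a point is d\<int> if its cycle is finite of length d and 0 if
  the cycle is infinite, so points with equipotent cycles have equal stabilizers. Then
  \<pi>^k x \<mapsto> \<pi>^k y is well defined, and together with its inverse on the cycle of y and the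
  identity elsewhere it is an automorphism sending x to y. Finally, a splitting R = S \<sqcup> T into
  two nonempty parts forces \<pi> to fix every point, and for \<pi> = id every splitting is allowed.
\<close>

context bijection
begin

definition ipow :: "int \<Rightarrow> 'a \<Rightarrow> 'a" where
  "ipow k = (if 0 \<le> k then f ^^ nat k else inv f ^^ nat (- k))"

lemma ipow_of_nat: "ipow (int n) = f ^^ n"
  by (simp add: ipow_def)

lemma ipow_minus_of_nat: "ipow (- int n) = inv f ^^ n"
  by (cases "n = 0") (simp_all add: ipow_def)

lemma ipow_0 [simp]: "ipow 0 = id"
  by (simp add: ipow_def)

lemma ipow_succ: "ipow (k + 1) = f \<circ> ipow k"
proof (cases "0 \<le> k")
  case True
  then have "nat (k + 1) = Suc (nat k)" by simp
  with True show ?thesis by (simp add: ipow_def)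
next
  case False
  define m where "m = nat (- k) - 1"
  with False have k: "k = - int (Suc m)" by simp
  then have "k + 1 = - int m" by simp
  then have "ipow (k + 1) = inv f ^^ m" by (simp add: ipow_minus_of_nat)
  moreover have "ipow k = inv f \<circ> inv f ^^ m" using k ipow_minus_of_nat[of "Suc m"] by simp
  ultimately show ?thesis by (simp add: fun_eq_iff)
qed

lemma ipow_pred: "ipow (k - 1) = inv f \<circ> ipow k"
  using ipow_succ[of "k - 1"] by (simp add: fun_eq_iff)

lemma ipow_add: "ipow (a + b) = ipow a \<circ> ipow b"
proof (induction a rule: int_induct[where k = 0])
  case base
  then show ?case by simp
next
  case (step1 i)
  have "ipow (i + 1 + b) = f \<circ> ipow (i + b)"
    using ipow_succ[of "i + b"] by (simp add: ac_simps)
  with step1 show ?case by (simp add: ipow_succ comp_assoc)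
next
  case (step2 i)
  have "ipow (i - 1 + b) = inv f \<circ> ipow (i + b)"
    using ipow_pred[of "i + b"] by (simp add: algebra_simps)
  with step2 show ?case by (simp add: ipow_pred comp_assoc)
qed

lemma ipow_add_apply: "ipow (a + b) x = ipow a (ipow b x)"
  by (simp add: ipow_add)

lemma ipow_1 [simp]: "ipow 1 = f"
  using ipow_succ[of 0] by simp

lemma ipow_commute: "ipow k (f x) = f (ipow k x)"
  by (metis ipow_1 ipow_add_apply add.commute)

lemma perm_cycle_eq_range: "perm_cycle f x = range (\<lambda>k. ipow k x)"
proof (intro equalityI subsetI)
  fix z assume "z \<in> perm_cycle f x"
  then obtain n where "z = ipow (int n) x \<or> z = ipow (- int n) x"
    unfolding perm_cycle_def ipow_of_nat ipow_minus_of_nat by blast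
  then show "z \<in> range (\<lambda>k. ipow k x)" by blast
next
  fix z assume "z \<in> range (\<lambda>k. ipow k x)"
  then obtain k where "z = ipow k x" by blast
  then show "z \<in> perm_cycle f x"
    unfolding perm_cycle_def ipow_def by (cases "0 \<le> k") auto
qed

lemma ipow_in_perm_cycle [simp]: "ipow k x \<in> perm_cycle f x"
  by (simp add: perm_cycle_eq_range)

lemma self_in_perm_cycle: "x \<in> perm_cycle f x"
  using ipow_in_perm_cycle[of 0 x] by simp

lemma perm_cycle_eq:
  assumes "y \<in> perm_cycle f x"
  shows "perm_cycle f y = perm_cycle f x"
proof -
  obtain j where y: "y = ipow j x"
    using assms by (auto simp: perm_cycle_eq_range)
  have "range (\<lambda>k. ipow k y) = range (\<lambda>k. ipow (k + j) x)"
    using y by (simp flip: ipow_add_apply)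
  also have "\<dots> = range (\<lambda>k. ipow k x)"
    by (auto simp: image_iff) (metis diff_add_cancel)
  finally show ?thesis
    by (simp add: perm_cycle_eq_range)
qed

lemma perm_cycle_apply: "perm_cycle f (f x) = perm_cycle f x"
  using perm_cycle_eq ipow_in_perm_cycle[of 1 x] by simp

lemma perm_cycles_disjoint:
  "perm_cycle f x \<noteq> perm_cycle f y \<Longrightarrow> perm_cycle f x \<inter> perm_cycle f y = {}"
  using perm_cycle_eq by blast

definition stabilizer :: "'a \<Rightarrow> int set" where
  "stabilizer x = {k. ipow k x = x}"

lemma ipow_eq_iff_diff_in_stabilizer: "ipow a x = ipow b x \<longleftrightarrow> a - b \<in> stabilizer x"
proof
  assume "ipow a x = ipow b x"
  then have "ipow (- b) (ipow a x) = x"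
    by (simp flip: ipow_add_apply)
  then show "a - b \<in> stabilizer x"
    by (simp add: stabilizer_def flip: ipow_add_apply)
next
  assume "a - b \<in> stabilizer x"
  then have "ipow b (ipow (a - b) x) = ipow b x"
    by (simp add: stabilizer_def)
  then show "ipow a x = ipow b x"
    by (simp flip: ipow_add_apply)
qed

lemma uminus_in_stabilizer: "k \<in> stabilizer x \<Longrightarrow> - k \<in> stabilizer x"
  using ipow_eq_iff_diff_in_stabilizer[of 0 x k] ipow_eq_iff_diff_in_stabilizer[of k x 0]
  by simp

lemma mult_in_stabilizer:
  assumes "n \<in> stabilizer x"
  shows "n * m \<in> stabilizer x"
proof (induction m rule: int_induct[where k = 0])
  case base
  then show ?case by (simp add: stabilizer_def)
next
  case (step1 i)
  then show ?case
    using assms ipow_eq_iff_diff_in_stabilizer[of "n * (i + 1)" x "n * i"]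
    by (simp add: algebra_simps stabilizer_def)
next
  case (step2 i)
  then show ?case
    using assms ipow_eq_iff_diff_in_stabilizer[of "n * (i - 1)" x "n * i"] uminus_in_stabilizer
    by (simp add: algebra_simps stabilizer_def)
qed

lemma ipow_mod_stabilizer:
  assumes "n \<in> stabilizer x"
  shows "ipow (k mod n) x = ipow k x"
proof -
  have "k mod n - k = n * - (k div n)"
    by (simp add: minus_div_mult_eq_mod [symmetric])
  then show ?thesis
    using mult_in_stabilizer[OF assms, of "- (k div n)"]
    by (simp add: ipow_eq_iff_diff_in_stabilizer)
qed

lemma perm_cycle_eq_image_period:
  assumes "0 < n" "n \<in> stabilizer x"
  shows "perm_cycle f x = (\<lambda>k. ipow k x) ` {0..<n}"
proof (intro equalityI subsetI)
  fix z assume "z \<in> perm_cycle f x"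
  then obtain k where "z = ipow (k mod n) x"
    using ipow_mod_stabilizer[OF assms(2)] by (auto simp: perm_cycle_eq_range)
  moreover have "k mod n \<in> {0..<n}"
    using assms(1) by simp
  ultimately show "z \<in> (\<lambda>k. ipow k x) ` {0..<n}"
    by blast
qed auto

lemma stabilizer_infinite_perm_cycle:
  assumes "infinite (perm_cycle f x)"
  shows "stabilizer x = {0}"
proof (intro equalityI subsetI)
  fix k assume k: "k \<in> stabilizer x"
  show "k \<in> {0}"
  proof (rule ccontr)
    assume "k \<notin> {0}"
    moreover have "\<bar>k\<bar> \<in> stabilizer x"
      using k uminus_in_stabilizer by (cases "0 \<le> k") simp_all
    ultimately have "finite (perm_cycle f x)"
      using perm_cycle_eq_image_period[of "\<bar>k\<bar>"] by simp
    with assms show False ..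
  qed
qed (simp add: stabilizer_def)

lemma finite_perm_cycle_period:
  assumes "finite (perm_cycle f x)"
  obtains n :: nat where "0 < n" "int n \<in> stabilizer x"
proof -
  have "range (\<lambda>n::nat. ipow (int n) x) \<subseteq> perm_cycle f x"
    by auto
  then have "\<not> inj (\<lambda>n::nat. ipow (int n) x)"
    using assms finite_subset finite_imageD infinite_UNIV_nat by blast
  then obtain i j :: nat where "i < j" "ipow (int j) x = ipow (int i) x"
    unfolding inj_def by (metis linorder_neqE_nat)
  then have "int (j - i) \<in> stabilizer x"
    by (simp add: ipow_eq_iff_diff_in_stabilizer)
  with \<open>i < j\<close> show ?thesis
    using that[of "j - i"] by simp
qed

lemma stabilizer_eq_multiples:
  assumes "0 < d" "d \<in> stabilizer x"
    and minimal: "\<And>m. 0 < m \<Longrightarrow> m < d \<Longrightarrow> m \<notin> stabilizer x"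
  shows "stabilizer x = {k. d dvd k}"
proof (intro equalityI subsetI CollectI)
  fix k assume "k \<in> stabilizer x"
  then have "k mod d \<in> stabilizer x"
    using ipow_mod_stabilizer[OF assms(2)] by (simp add: stabilizer_def)
  moreover have "0 \<le> k mod d" "k mod d < d"
    using assms(1) by simp_all
  ultimately have "k mod d = 0"
    using minimal by force
  then show "d dvd k" by auto
next
  fix k assume "k \<in> {k. d dvd k}"
  then show "k \<in> stabilizer x"
    using mult_in_stabilizer[OF assms(2)] by auto
qed

lemma card_perm_cycle_if_stabilizer_eq:
  assumes "0 < d" "stabilizer x = {k. d dvd k}"
  shows "card (perm_cycle f x) = nat d"
proof -
  have "inj_on (\<lambda>k. ipow k x) {0..<d}"
  proof (rule inj_onI)
    fix a b assume "a \<in> {0..<d}" "b \<in> {0..<d}" "ipow a x = ipow b x"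
    then show "a = b"
      using assms(2) by (simp add: ipow_eq_iff_diff_in_stabilizer flip: mod_eq_dvd_iff)
  qed
  then show ?thesis
    using assms perm_cycle_eq_image_period[OF assms(1)] by (simp add: card_image)
qed

lemma stabilizer_finite_perm_cycle:
  assumes "finite (perm_cycle f x)"
  shows "stabilizer x = {k. int (card (perm_cycle f x)) dvd k}"
proof -
  obtain n :: nat where "0 < n \<and> int n \<in> stabilizer x"
    using finite_perm_cycle_period[OF assms] by blast
  then obtain d :: nat where d: "0 < d" "int d \<in> stabilizer x"
    and minimal: "\<And>m. m < d \<Longrightarrow> \<not> (0 < m \<and> int m \<in> stabilizer x)"
    using exists_least_iff[of "\<lambda>n. 0 < n \<and> int n \<in> stabilizer x"] by blast
  have "stabilizer x = {k. int d dvd k}"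
  proof (rule stabilizer_eq_multiples)
    show "m \<notin> stabilizer x" if "0 < m" "m < int d" for m
      using minimal[of "nat m"] that by simp
  qed (use d in simp_all)
  moreover from this have "card (perm_cycle f x) = d"
    using card_perm_cycle_if_stabilizer_eq[of "int d"] d by simp
  ultimately show ?thesis by simp
qed

lemma stabilizer_eq_if_eqpoll:
  assumes "perm_cycle f x \<approx> perm_cycle f y"
  shows "stabilizer x = stabilizer y"
proof (cases "finite (perm_cycle f x)")
  case True
  moreover from this have "finite (perm_cycle f y)"
    using eqpoll_finite_iff[OF assms] by simp
  moreover from calculation have "card (perm_cycle f x) = card (perm_cycle f y)"
    using assms eqpoll_iff_card by blast
  ultimately show ?thesis
    by (simp add: stabilizer_finite_perm_cycle)
next
  case False
  then show ?thesis
    using eqpoll_finite_iff[OF assms] by (simp add: stabilizer_infinite_perm_cycle)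
qed

definition cycle_transport :: "'a \<Rightarrow> 'a \<Rightarrow> 'a \<Rightarrow> 'a" where
  "cycle_transport x y z = ipow (SOME k. ipow k x = z) y"

lemma cycle_transport_ipow:
  assumes "stabilizer x \<subseteq> stabilizer y"
  shows "cycle_transport x y (ipow k x) = ipow k y"
proof -
  define j where "j = (SOME j. ipow j x = ipow k x)"
  have "ipow j x = ipow k x"
    unfolding j_def by (rule someI) (rule refl)
  then have "ipow j y = ipow k y"
    using assms by (auto simp: ipow_eq_iff_diff_in_stabilizer)
  then show ?thesis
    by (simp add: cycle_transport_def j_def)
qed

definition cycle_swap :: "'a \<Rightarrow> 'a \<Rightarrow> 'a \<Rightarrow> 'a" where
  "cycle_swap x y z =
    (if z \<in> perm_cycle f x then cycle_transport x y z
     else if z \<in> perm_cycle f y then cycle_transport y x z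
     else z)"

lemma perm_cycle_cases:
  obtains k where "z = ipow k x" | k where "z = ipow k y"
    | "z \<notin> perm_cycle f x" "z \<notin> perm_cycle f y"
  by (auto simp: perm_cycle_eq_range)

context
  fixes x y :: 'a
  assumes disjoint: "perm_cycle f x \<inter> perm_cycle f y = {}"
    and same_stabilizer: "stabilizer x = stabilizer y"
begin

lemma cycle_swap_ipow_left [simp]: "cycle_swap x y (ipow k x) = ipow k y"
  using same_stabilizer by (simp add: cycle_swap_def cycle_transport_ipow)

lemma cycle_swap_ipow_right [simp]: "cycle_swap x y (ipow k y) = ipow k x"
proof -
  have "ipow k y \<notin> perm_cycle f x"
    using disjoint ipow_in_perm_cycle by blast
  then show ?thesis
    using same_stabilizer by (simp add: cycle_swap_def cycle_transport_ipow)
qed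

lemma cycle_swap_outside:
  "z \<notin> perm_cycle f x \<Longrightarrow> z \<notin> perm_cycle f y \<Longrightarrow> cycle_swap x y z = z"
  by (simp add: cycle_swap_def)

lemma cycle_swap_involution: "cycle_swap x y (cycle_swap x y z) = z"
  by (cases rule: perm_cycle_cases[where z = z and x = x and y = y])
    (simp_all add: cycle_swap_outside)

lemma cycle_swap_commute: "cycle_swap x y (f z) = f (cycle_swap x y z)"
proof (cases rule: perm_cycle_cases[where z = z and x = x and y = y])
  case (1 k)
  then have "cycle_swap x y (f z) = cycle_swap x y (ipow (1 + k) x)"
    by (simp add: ipow_add_apply)
  also have "\<dots> = f (cycle_swap x y z)"
    using 1 cycle_swap_ipow_left[of "1 + k"] by (simp add: ipow_add_apply)
  finally show ?thesis .
next
  case (2 k)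
  then have "cycle_swap x y (f z) = cycle_swap x y (ipow (1 + k) y)"
    by (simp add: ipow_add_apply)
  also have "\<dots> = f (cycle_swap x y z)"
    using 2 cycle_swap_ipow_right[of "1 + k"] by (simp add: ipow_add_apply)
  finally show ?thesis .
next
  case 3
  then have "f z \<notin> perm_cycle f x" "f z \<notin> perm_cycle f y"
    using perm_cycle_eq[where y = "f z"] perm_cycle_apply self_in_perm_cycle by metis+
  with 3 show ?thesis
    by (simp add: cycle_swap_outside)
qed

end

end

locale permutation_rack =
  fixes R :: "'a set" and \<pi> :: "'a \<Rightarrow> 'a"
  assumes permutes: "\<pi> permutes R"
begin

sublocale bijection \<pi>
  using permutes by unfold_locales (rule permutes_bij)

lemma ipow_permutes: "ipow k permutes R"
  unfolding ipow_def using permutes permutes_inv[OF permutes] by (simp add: permutes_funpow)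

lemma perm_cycle_subset: "x \<in> R \<Longrightarrow> perm_cycle \<pi> x \<subseteq> R"
  using ipow_permutes permutes_in_image by (fastforce simp: perm_cycle_eq_range)

lemma lmul_perm_rack_op [simp]: "lmul R (perm_rack_op \<pi>) a = \<pi>"
  using permutes_not_in[OF permutes] by (auto simp: lmul_def perm_rack_op_def fun_eq_iff)

lemma inn_perm_rack_op:
  assumes "R \<noteq> {}"
  shows "inn R (perm_rack_op \<pi>) = range ipow"
proof (intro equalityI subsetI)
  fix g assume "g \<in> inn R (perm_rack_op \<pi>)"
  then show "g \<in> range ipow"
  proof (induction rule: inn.induct)
    case inn_id
    then show ?case using ipow_0 by (metis rangeI)
  next
    case (inn_mul g a)
    then obtain k where "g = ipow k" by blast
    then have "lmul R (perm_rack_op \<pi>) a \<circ> g = ipow (k + 1)"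
      by (simp add: ipow_succ)
    then show ?case by (metis rangeI)
  next
    case (inn_inv g a)
    then obtain k where "g = ipow k" by blast
    then have "inv (lmul R (perm_rack_op \<pi>) a) \<circ> g = ipow (k - 1)"
      by (simp add: ipow_pred)
    then show ?case by (metis rangeI)
  qed
next
  obtain a where a: "a \<in> R" using assms by blast
  have "\<pi> ^^ n \<in> inn R (perm_rack_op \<pi>) \<and> inv \<pi> ^^ n \<in> inn R (perm_rack_op \<pi>)" for n
    using inn.inn_mul[OF _ a, of _ "perm_rack_op \<pi>"] inn.inn_inv[OF _ a, of _ "perm_rack_op \<pi>"]
    by (induction n) (simp_all add: inn.inn_id)
  then show "g \<in> inn R (perm_rack_op \<pi>)" if "g \<in> range ipow" for g
    using that by (auto simp: ipow_def)
qed

lemma rack_aut_perm_rack_op_iff: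
  assumes "R \<noteq> {}"
  shows "rack_aut R (perm_rack_op \<pi>) g \<longleftrightarrow> bij_betw g R R \<and> (\<forall>b\<in>R. g (\<pi> b) = \<pi> (g b))"
  using assms by (auto simp: rack_aut_def perm_rack_op_def)

lemma commuting_map_ipow:
  assumes commute: "\<forall>b\<in>R. g (\<pi> b) = \<pi> (g b)" and "z \<in> R"
  shows "g (ipow k z) = ipow k (g z)"
proof -
  have inv_commute: "g (inv \<pi> b) = inv \<pi> (g b)" if "b \<in> R" for b
  proof -
    have "inv \<pi> b \<in> R"
      using permutes_in_image[OF permutes_inv[OF permutes]] that by simp
    then have "g b = \<pi> (g (inv \<pi> b))"
      using commute by (metis inv_right)
    then show ?thesis
      by (metis inv_left)
  qed
  have "ipow k z \<in> R" for k
    using \<open>z \<in> R\<close> permutes_in_image[OF ipow_permutes] by simp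
  then show ?thesis
  proof (induction k rule: int_induct[where k = 0])
    case (step1 i)
    then show ?case using commute by (simp add: ipow_succ)
  next
    case (step2 i)
    then show ?case using inv_commute by (simp add: ipow_pred)
  qed simp
qed

lemma commuting_bij_from_eqpoll_cycles:
  assumes "x \<in> R" "y \<in> R" "perm_cycle \<pi> x \<approx> perm_cycle \<pi> y"
  obtains g where "bij_betw g R R" "\<forall>b\<in>R. g (\<pi> b) = \<pi> (g b)" "g x = y"
proof (cases "perm_cycle \<pi> x = perm_cycle \<pi> y")
  case True
  then have "y \<in> perm_cycle \<pi> x"
    using self_in_perm_cycle by simp
  then obtain k where "y = ipow k x"
    by (auto simp: perm_cycle_eq_range)
  then show ?thesis
    using that[of "ipow k"] ipow_permutes permutes_imp_bij ipow_commute by blast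
next
  case False
  let ?g = "cycle_swap x y"
  have disjoint: "perm_cycle \<pi> x \<inter> perm_cycle \<pi> y = {}"
    using False by (rule perm_cycles_disjoint)
  note swap = disjoint stabilizer_eq_if_eqpoll[OF assms(3)]
  have "?g z \<in> R" if "z \<in> R" for z
    using perm_cycle_subset[OF assms(1)] perm_cycle_subset[OF assms(2)] that
    by (cases rule: perm_cycle_cases[where z = z and x = x and y = y])
      (auto simp: swap cycle_swap_outside)
  then have "bij_betw ?g R R"
    by (intro bij_betwI[where g = ?g]) (auto simp: cycle_swap_involution[OF swap])
  moreover have "?g x = y"
    using cycle_swap_ipow_left[OF swap, of 0] by simp
  ultimately show ?thesis
    using that cycle_swap_commute[OF swap] by blast
qed

lemma rack_connected_iff:
  assumes "R \<noteq> {}"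
  shows "rack_connected R (perm_rack_op \<pi>) \<longleftrightarrow> (\<forall>x\<in>R. perm_cycle \<pi> x = R)"
proof -
  have "(\<exists>g\<in>inn R (perm_rack_op \<pi>). g x = y) \<longleftrightarrow> y \<in> perm_cycle \<pi> x" for x y
    using assms by (auto simp: inn_perm_rack_op perm_cycle_eq_range)
  then show ?thesis
    using assms perm_cycle_subset by (auto simp: rack_connected_def)
qed

lemma rack_homogeneous_iff:
  assumes "R \<noteq> {}"
  shows "rack_homogeneous R (perm_rack_op \<pi>) \<longleftrightarrow>
    (\<forall>x\<in>R. \<forall>y\<in>R. perm_cycle \<pi> x \<approx> perm_cycle \<pi> y)"
proof
  assume homogeneous: "rack_homogeneous R (perm_rack_op \<pi>)"
  show "\<forall>x\<in>R. \<forall>y\<in>R. perm_cycle \<pi> x \<approx> perm_cycle \<pi> y"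
  proof (intro ballI)
    fix x y assume "x \<in> R" "y \<in> R"
    then obtain g where "rack_aut R (perm_rack_op \<pi>) g" "g x = y"
      using homogeneous by (auto simp: rack_homogeneous_def)
    then have g: "bij_betw g R R" "\<forall>b\<in>R. g (\<pi> b) = \<pi> (g b)" "g x = y"
      by (simp_all add: rack_aut_perm_rack_op_iff[OF assms])
    have "g ` perm_cycle \<pi> x = range (\<lambda>k. g (ipow k x))"
      by (simp add: perm_cycle_eq_range image_image)
    also have "\<dots> = perm_cycle \<pi> y"
      using commuting_map_ipow[OF g(2) \<open>x \<in> R\<close>] g(3) by (simp add: perm_cycle_eq_range)
    finally have "g ` perm_cycle \<pi> x = perm_cycle \<pi> y" .
    moreover have "inj_on g (perm_cycle \<pi> x)"
      using g(1) perm_cycle_subset[OF \<open>x \<in> R\<close>] bij_betw_imp_inj_on inj_on_subset by blast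
    ultimately show "perm_cycle \<pi> x \<approx> perm_cycle \<pi> y"
      unfolding eqpoll_def bij_betw_def by blast
  qed
next
  assume eqpoll: "\<forall>x\<in>R. \<forall>y\<in>R. perm_cycle \<pi> x \<approx> perm_cycle \<pi> y"
  show "rack_homogeneous R (perm_rack_op \<pi>)"
    unfolding rack_homogeneous_def
  proof (intro conjI assms ballI)
    fix x y assume "x \<in> R" "y \<in> R"
    with eqpoll obtain g where "bij_betw g R R" "\<forall>b\<in>R. g (\<pi> b) = \<pi> (g b)" "g x = y"
      by (blast elim: commuting_bij_from_eqpoll_cycles)
    then show "\<exists>g. rack_aut R (perm_rack_op \<pi>) g \<and> g x = y"
      using rack_aut_perm_rack_op_iff[OF assms] by blast
  qed
qed

lemma rack_irreducible_iff:
  assumes "R \<noteq> {}"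
  shows "rack_irreducible R (perm_rack_op \<pi>) \<longleftrightarrow> \<pi> \<noteq> id \<or> (\<forall>x\<in>R. \<forall>y\<in>R. x = y)"
proof
  assume irreducible: "rack_irreducible R (perm_rack_op \<pi>)"
  show "\<pi> \<noteq> id \<or> (\<forall>x\<in>R. \<forall>y\<in>R. x = y)"
  proof (rule ccontr)
    assume "\<not> ?thesis"
    then obtain x y where "\<pi> = id" "x \<in> R" "y \<in> R" "x \<noteq> y"
      by blast
    then have "{x} = {} \<or> R - {x} = {}"
      using irreducible unfolding rack_irreducible_def
      by (elim conjE allE[of _ "{x}"] allE[of _ "R - {x}"] mp)
        (auto simp: rack_closed_def perm_rack_op_def)
    with \<open>y \<in> R\<close> \<open>x \<noteq> y\<close> show False
      by blast
  qed
next
  assume nontrivial: "\<pi> \<noteq> id \<or> (\<forall>x\<in>R. \<forall>y\<in>R. x = y)"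
  show "rack_irreducible R (perm_rack_op \<pi>)"
    unfolding rack_irreducible_def
  proof (intro conjI assms allI impI)
    fix S T
    assume split: "S \<inter> T = {} \<and> S \<union> T = R \<and> rack_closed S (perm_rack_op \<pi>) \<and>
      rack_closed T (perm_rack_op \<pi>) \<and>
      (\<forall>s\<in>S. \<forall>t\<in>T. perm_rack_op \<pi> s t = t \<and> perm_rack_op \<pi> t s = s)"
    show "S = {} \<or> T = {}"
    proof (rule ccontr)
      assume "\<not> ?thesis"
      then obtain s t where "s \<in> S" "t \<in> T"
        by blast
      with split have "\<pi> z = z" if "z \<in> R" for z
        using that by (auto simp: perm_rack_op_def)
      then have "\<pi> = id"
        using permutes_not_in[OF permutes] by fastforce
      moreover have "s \<noteq> t" "s \<in> R" "t \<in> R"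
        using split \<open>s \<in> S\<close> \<open>t \<in> T\<close> by blast+
      ultimately show False
        using nontrivial by blast
    qed
  qed
qed

end

theorem proposition6p1:
  fixes R :: "'a set" and \<pi> :: "'a \<Rightarrow> 'a"
  assumes "\<pi> permutes R" and "R \<noteq> {}"
  shows "(rack_connected R (perm_rack_op \<pi>) \<longleftrightarrow> (\<forall>x\<in>R. perm_cycle \<pi> x = R))
       \<and> (rack_homogeneous R (perm_rack_op \<pi>) \<longleftrightarrow>
            (\<forall>x\<in>R. \<forall>y\<in>R. perm_cycle \<pi> x \<approx> perm_cycle \<pi> y))
       \<and> (rack_irreducible R (perm_rack_op \<pi>) \<longleftrightarrow> \<pi> \<noteq> id \<or> (\<forall>x\<in>R. \<forall>y\<in>R. x = y))"
proof -
  interpret permutation_rack R \<pi>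
    using assms(1) by unfold_locales
  show ?thesis
    using rack_connected_iff rack_homogeneous_iff rack_irreducible_iff assms(2) by blast
qed

end
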